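(* Suppose $a\in C^2(\mathbb{R})$. Let $\tilde\alpha=(\tilde\alpha_1,\tilde\alpha_2)\in\mathbb{R}^2$ be such that $a'(\tilde\alpha_2)>0$. Given $s_0,t_0>0$ sufficiently small depending on the function $a$ and $\tilde\alpha_2$, there exists $0<\epsilon_0<1$ depending on the function $a$, $\tilde\alpha_2$, $s_0$ and $t_0$ such that, for all $\epsilon\leq \epsilon_0$, there exists a collection of weights $\{[\gamma^{\epsilon}]_j\}_{j=0}^4 \subset \mathbb{R}_{+}$ with $\sum_{j=1}^{4}[\gamma^{\epsilon}]_j=\epsilon$ and $[\gamma^{\epsilon}]_0=1-\epsilon$ such that \begin{equation*} \mu^{\epsilon}:=\sum_{j=0}^{4} [\gamma^{\epsilon}]_j\delta_{\zeta_j} \in \mathcal{M}^{pc}(\mathcal{K}^{\tilde\alpha}_1). \end{equation*}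
   Context: Let $a:\mathbb{R}\to\mathbb{R}$ and let $F(\xi)=\int_0^\xi a(s)\,ds$. For $\alpha\in\mathbb{R}^2$ define $$P_1^{\alpha}(u,v):=\begin{pmatrix} u-\alpha_1 & v-\alpha_2 \\ a(v)-a(\alpha_2) & u-\alpha_1\\ (u-\alpha_1)(a(v)-a(\alpha_2)) & \frac{(u-\alpha_1)^2}{2}+F(v)-F(\alpha_2)-a(\alpha_2)(v-\alpha_2) \end{pmatrix}$$ and $\mathcal{K}^{\alpha}_1:=\{P_1^{\alpha}(u,v):u,v\in\mathbb{R}\}\subset M^{3\times 2}$. For a set $\mathcal{K}$ of matrices, $\mathcal{M}^{pc}(\mathcal{K})$ denotes the set of probability measures $\mu$ supported on $\mathcal{K}$ such that $\int M(X)\,d\mu(X)=M\left(\int X\,d\mu(X)\right)$ for every minor $M$ (Null Lagrangian measures). Given $s_0,t_0>0$, set $\zeta_0:=P_1^{\tilde\alpha}(\tilde\alpha_1,\tilde\alpha_2)=0$, $\zeta_1:=P_1^{\tilde\alpha}(\tilde\alpha_1+s_0,\tilde\alpha_2)$, $\zeta_2:=P_1^{\tilde\alpha}(\tilde\alpha_1-s_0,\tilde\alpha_2)$, $\zeta_3:=P_1^{\tilde\alpha}(\tilde\alpha_1,\tilde\alpha_2+t_0)$, $\zeta_4:=P_1^{\tilde\alpha}(\tilde\alpha_1,\tilde\alpha_2-t_0)$. *)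

theory Defs
  imports "HOL-Analysis.Analysis"
begin

text \<open>3x2 real matrices: 3 rows, 2 columns. Entry (i,k) is X $ i $ k.\<close>
type_synonym mat32 = "real^2^3"

definition Fint :: "(real \<Rightarrow> real) \<Rightarrow> real \<Rightarrow> real" where
  "Fint a xi = (if 0 \<le> xi then integral {0..xi} a else - integral {xi..0} a)"

definition P1 :: "(real \<Rightarrow> real) \<Rightarrow> real \<times> real \<Rightarrow> real \<Rightarrow> real \<Rightarrow> mat32" where
  "P1 a \<alpha> u v = (let \<alpha>1 = fst \<alpha>; \<alpha>2 = snd \<alpha> in
     vector [ vector [u - \<alpha>1, v - \<alpha>2],
              vector [a v - a \<alpha>2, u - \<alpha>1],
              vector [(u - \<alpha>1) * (a v - a \<alpha>2),
                      (u - \<alpha>1)^2 / 2 + Fint a v - Fint a \<alpha>2 - a \<alpha>2 * (v - \<alpha>2)] ])"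

definition K1 :: "(real \<Rightarrow> real) \<Rightarrow> real \<times> real \<Rightarrow> mat32 set" where
  "K1 a \<alpha> = {P1 a \<alpha> u v | u v. True}"

text \<open>All minors of a 3x2 matrix: the entries (1x1 minors) and the 2x2 minors
  (rows i,j, columns k,l; taking i<>j, k<>l covers all of them up to sign).\<close>
definition minors32 :: "(mat32 \<Rightarrow> real) set" where
  "minors32 = {(\<lambda>X. X $ i $ k) | i k. True}
     \<union> {(\<lambda>X. X $ i $ k * X $ j $ l - X $ i $ l * X $ j $ k) | i j k l. i \<noteq> j \<and> k \<noteq> l}"

text \<open>The discrete probability measure sum_{j<n} w_j delta_{z_j} belongs to M^pc(K):
  it is a probability measure supported on K, and for every minor M,
  int M d mu = M(int X d mu).\<close>
definition Mpc_discrete :: "mat32 set \<Rightarrow> (nat \<Rightarrow> real) \<Rightarrow> (nat \<Rightarrow> mat32) \<Rightarrow> nat \<Rightarrow> bool" where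
  "Mpc_discrete K w z n \<longleftrightarrow>
     (\<forall>j<n. 0 \<le> w j) \<and> (\<Sum>j<n. w j) = 1 \<and> (\<forall>j<n. 0 < w j \<longrightarrow> z j \<in> K) \<and>
     (\<forall>M\<in>minors32. (\<Sum>j<n. w j * M (z j)) = M (\<Sum>j<n. w j *\<^sub>R z j))"

definition zeta :: "(real \<Rightarrow> real) \<Rightarrow> real \<times> real \<Rightarrow> real \<Rightarrow> real \<Rightarrow> nat \<Rightarrow> mat32" where
  "zeta a \<alpha> s0 t0 j =
     (if j = 1 then P1 a \<alpha> (fst \<alpha> + s0) (snd \<alpha>)
      else if j = 2 then P1 a \<alpha> (fst \<alpha> - s0) (snd \<alpha>)
      else if j = 3 then P1 a \<alpha> (fst \<alpha>) (snd \<alpha> + t0)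
      else if j = 4 then P1 a \<alpha> (fst \<alpha>) (snd \<alpha> - t0)
      else P1 a \<alpha> (fst \<alpha>) (snd \<alpha>))"

end

(* For small t the numbers B+ = a(\<alpha>2 + t) - a(\<alpha>2), B- = a(\<alpha>2) - a(\<alpha>2 - t) and the
   tangent-line defects G+, G- of F at \<alpha>2 are all positive, because a is strictly
   increasing near \<alpha>2.  Putting a common weight p on \<zeta>1, \<zeta>2 and weights q3, q4 on \<zeta>3, \<zeta>4,
   the minor conditions reduce to two polynomial equations in (p, q3, q4).  Parametrised by
   the (3,2) entry m of the barycentre they have an explicit solution that is continuous in m,
   positive for small m > 0 and zero at m = 0, so by the intermediate value theorem every small
   total mass \<epsilon> is attained. *)

theory Submission
  imports Defs
begin

definition det2 :: "3 \<Rightarrow> 3 \<Rightarrow> mat32 \<Rightarrow> real" where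
  "det2 i j X = X $ i $ 1 * X $ j $ 2 - X $ i $ 2 * X $ j $ 1"

lemma minors32_cases:
  assumes "M \<in> minors32"
  obtains i k where "M = (\<lambda>X. X $ i $ k)"
    | i j where "M = det2 i j"
    | i j where "M = (\<lambda>X. - det2 i j X)"
proof -
  have cols: "(k = 1 \<and> l = 2) \<or> (k = 2 \<and> l = 1)" if "k \<noteq> l" for k l :: 2
    using that exhaust_2[of k] exhaust_2[of l] by auto
  from assms consider (entry) i k where "M = (\<lambda>X. X $ i $ k)"
    | (minor) i j k l where "M = (\<lambda>X. X $ i $ k * X $ j $ l - X $ i $ l * X $ j $ k)" "k \<noteq> l"
    unfolding minors32_def by blast
  then show ?thesis
  proof cases
    case entry then show ?thesis using that(1) by blast
  next
    case (minor i j k l)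
    from cols[OF minor(2)] have "M = det2 i j \<or> M = (\<lambda>X. - det2 i j X)"
      using minor(1) by (auto simp: det2_def fun_eq_iff)
    then show ?thesis using that(2,3) by blast
  qed
qed

lemma Mpc_discreteI:
  fixes w :: "nat \<Rightarrow> real" and z :: "nat \<Rightarrow> mat32" and n :: nat
  defines "mean \<equiv> \<Sum>j<n. w j *\<^sub>R z j"
  assumes "\<forall>j<n. 0 \<le> w j" and "(\<Sum>j<n. w j) = 1" and "\<forall>j<n. 0 < w j \<longrightarrow> z j \<in> K"
    and "(\<Sum>j<n. w j * det2 1 2 (z j)) = det2 1 2 mean"
    and "(\<Sum>j<n. w j * det2 1 3 (z j)) = det2 1 3 mean"
    and "(\<Sum>j<n. w j * det2 2 3 (z j)) = det2 2 3 mean"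
  shows "Mpc_discrete K w z n"
proof -
  have swap: "det2 j i X = - det2 i j X" for i j X
    by (simp add: det2_def)
  have det2_mean: "(\<Sum>k<n. w k * det2 i j (z k)) = det2 i j mean" for i j
  proof -
    have zero: "det2 i i X = 0" for i X by (simp add: det2_def)
    have "(i = 1 \<or> i = 2 \<or> i = 3) \<and> (j = 1 \<or> j = 2 \<or> j = 3)"
      using exhaust_3[of i] exhaust_3[of j] by blast
    then show ?thesis
      using assms(5-7) swap[of 1 2] swap[of 1 3] swap[of 2 3]
      by (elim conjE disjE) (simp_all add: zero sum_negf)
  qed
  show ?thesis
    unfolding Mpc_discrete_def
  proof (intro conjI ballI assms(2-4))
    fix M assume "M \<in> minors32"
    then show "(\<Sum>j<n. w j * M (z j)) = M (\<Sum>j<n. w j *\<^sub>R z j)"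
      by (cases rule: minors32_cases) (simp_all add: det2_mean sum_negf mean_def)
  qed
qed

(* The (1,2)- and (2,3)-minor conditions for weights p, p, q3, q4 on \<zeta>1, ..., \<zeta>4; the
   (1,3)-minor condition holds automatically since \<zeta>1 and \<zeta>2 carry equal weights. *)
definition minor_balance ::
    "real \<Rightarrow> real \<Rightarrow> real \<Rightarrow> real \<Rightarrow> real \<Rightarrow> real \<Rightarrow> real \<Rightarrow> real \<Rightarrow> real \<Rightarrow> bool" where
  "minor_balance s t Bp Bm Gp Gm p q3 q4 \<longleftrightarrow>
     2 * p * s^2 - t * q3 * Bp - t * q4 * Bm = - t * (q3 - q4) * (q3 * Bp - q4 * Bm) \<and>
     q3 * Bp * Gp - q4 * Bm * Gm = (q3 * Bp - q4 * Bm) * (p * s^2 + q3 * Gp + q4 * Gm)"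

lemma Mpc_discrete_zeta:
  fixes a :: "real \<Rightarrow> real" and \<alpha> :: "real \<times> real" and s t :: real and w :: "nat \<Rightarrow> real"
  defines "Bp \<equiv> a (snd \<alpha> + t) - a (snd \<alpha>)"
    and "Bm \<equiv> a (snd \<alpha>) - a (snd \<alpha> - t)"
    and "Gp \<equiv> Fint a (snd \<alpha> + t) - Fint a (snd \<alpha>) - a (snd \<alpha>) * t"
    and "Gm \<equiv> Fint a (snd \<alpha> - t) - Fint a (snd \<alpha>) + a (snd \<alpha>) * t"
  assumes "\<forall>j<5. 0 \<le> w j" and "(\<Sum>j<5. w j) = 1" and "w 2 = w 1"
    and "minor_balance s t Bp Bm Gp Gm (w 1) (w 3) (w 4)"
  shows "Mpc_discrete (K1 a \<alpha>) w (zeta a \<alpha> s t) 5"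
proof -
  define z where "z = zeta a \<alpha> s t"
  have z0: "z 0 = vector [vector [0, 0], vector [0, 0], vector [0, 0]]"
    and z1: "z 1 = vector [vector [s, 0], vector [0, s], vector [0, s^2/2]]"
    and z2: "z 2 = vector [vector [-s, 0], vector [0, -s], vector [0, s^2/2]]"
    and z3: "z 3 = vector [vector [0, t], vector [Bp, 0], vector [0, Gp]]"
    and z4: "z 4 = vector [vector [0, -t], vector [-Bm, 0], vector [0, Gm]]"
    unfolding z_def zeta_def P1_def Bp_def Bm_def Gp_def Gm_def by (simp_all add: Let_def)
  have sum5: "(\<Sum>j<5. f j) = f 0 + f 1 + f 2 + f 3 + f 4" for f :: "nat \<Rightarrow> 'b::comm_monoid_add"
    by (simp add: numeral_eq_Suc)
  have "Mpc_discrete (K1 a \<alpha>) w z 5"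
  proof (rule Mpc_discreteI)
    show "\<forall>j<5. 0 < w j \<longrightarrow> z j \<in> K1 a \<alpha>"
      by (auto simp: z_def zeta_def K1_def)
    show "\<forall>j<5. 0 \<le> w j" "(\<Sum>j<5. w j) = 1" by fact+
    show "(\<Sum>j<5. w j * det2 1 2 (z j)) = det2 1 2 (\<Sum>j<5. w j *\<^sub>R z j)"
      and "(\<Sum>j<5. w j * det2 1 3 (z j)) = det2 1 3 (\<Sum>j<5. w j *\<^sub>R z j)"
      and "(\<Sum>j<5. w j * det2 2 3 (z j)) = det2 2 3 (\<Sum>j<5. w j *\<^sub>R z j)"
      using assms(7,8) unfolding minor_balance_def det2_def sum5 z0 z1 z2 z3 z4
      by (simp_all add: algebra_simps power2_eq_square)
  qed
  then show ?thesis by (simp add: z_def)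
qed

(* Solutions are parametrised by m = p s^2 + q3 Gp + q4 Gm.  The (2,3) condition forces
   (q3, q4) = scale m * (dir3 m, dir4 m), the (1,2) condition then determines p, and the
   definition of m becomes a quadratic equation for scale m, of which we take the root
   vanishing at m = 0. *)
locale five_point_weights =
  fixes s t Bp Bm Gp Gm :: real
  assumes pos: "0 < s" "0 < t" "0 < Bp" "0 < Bm" "0 < Gp" "0 < Gm"
begin

definition dir3 :: "real \<Rightarrow> real" where "dir3 m = Bm * (Gm - m)"
definition dir4 :: "real \<Rightarrow> real" where "dir4 m = Bp * (Gp - m)"

definition lin_coeff :: "real \<Rightarrow> real" where
  "lin_coeff m = t * (dir3 m * Bp + dir4 m * Bm) / 2 + dir3 m * Gp + dir4 m * Gm"
definition quad_coeff :: "real \<Rightarrow> real" where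
  "quad_coeff m = t * (dir3 m - dir4 m) * (dir3 m * Bp - dir4 m * Bm) / 2"
definition discr :: "real \<Rightarrow> real" where
  "discr m = (lin_coeff m)^2 - 4 * quad_coeff m * m"
definition scale :: "real \<Rightarrow> real" where
  "scale m = 2 * m / (lin_coeff m + sqrt (discr m))"

definition sym_factor :: "real \<Rightarrow> real" where
  "sym_factor m =
     dir3 m * Bp + dir4 m * Bm - scale m * (dir3 m - dir4 m) * (dir3 m * Bp - dir4 m * Bm)"

definition weight1 :: "real \<Rightarrow> real" where "weight1 m = t * scale m * sym_factor m / (2 * s^2)"
definition weight3 :: "real \<Rightarrow> real" where "weight3 m = scale m * dir3 m"
definition weight4 :: "real \<Rightarrow> real" where "weight4 m = scale m * dir4 m"
definition mass :: "real \<Rightarrow> real" where "mass m = 2 * weight1 m + weight3 m + weight4 m"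

definition admissible :: "real \<Rightarrow> bool" where
  "admissible m \<longleftrightarrow> 0 < lin_coeff m \<and> 0 < discr m \<and> m < Gp \<and> m < Gm \<and> 0 < sym_factor m"

lemma isCont_scale:
  assumes "0 < lin_coeff m" "0 < discr m"
  shows "isCont scale m"
proof -
  have "lin_coeff m + sqrt (discr m) \<noteq> 0"
    using assms real_sqrt_gt_zero[of "discr m"] by linarith
  then show ?thesis
    unfolding scale_def discr_def lin_coeff_def quad_coeff_def dir3_def dir4_def
    by (intro continuous_intros) auto
qed

lemma admissible_near_zero: "\<exists>m0>0. \<forall>m. 0 \<le> m \<and> m \<le> m0 \<longrightarrow> admissible m"
proof -
  have lin0: "0 < lin_coeff 0"
    unfolding lin_coeff_def dir3_def dir4_def
    using pos by (intro add_pos_pos mult_pos_pos divide_pos_pos) auto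
  have discr0: "0 < discr 0" using lin0 by (simp add: discr_def)
  have adm0: "admissible 0"
    using lin0 discr0 pos
    by (auto simp: admissible_def sym_factor_def scale_def dir3_def dir4_def
        intro!: mult_pos_pos add_pos_pos)
  have "isCont scale 0" using lin0 discr0 by (rule isCont_scale)
  then have cont: "isCont lin_coeff 0" "isCont discr 0" "isCont sym_factor 0"
    "isCont (\<lambda>m. Gp - m) 0" "isCont (\<lambda>m. Gm - m) 0"
    unfolding sym_factor_def discr_def lin_coeff_def quad_coeff_def dir3_def dir4_def
    by (auto intro!: continuous_intros)
  have pos_near: "\<forall>\<^sub>F m in nhds 0. 0 < f m" if "isCont f 0" "0 < f 0" for f :: "real \<Rightarrow> real"
    using that order_tendstoD(1) unfolding isCont_def tendsto_at_iff_tendsto_nhds by blast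
  have "\<forall>\<^sub>F m in nhds 0.
          0 < lin_coeff m \<and> 0 < discr m \<and> 0 < Gp - m \<and> 0 < Gm - m \<and> 0 < sym_factor m"
    using adm0 unfolding admissible_def by (intro eventually_conj pos_near cont) auto
  then obtain d where "0 < d" and d: "\<And>m. dist m 0 < d \<Longrightarrow> admissible m"
    unfolding eventually_nhds_metric admissible_def by auto
  then show ?thesis
    by (intro exI[of _ "d / 2"]) (auto simp: dist_real_def)
qed

lemma scale_root:
  assumes "admissible m"
  shows "quad_coeff m * (scale m)^2 - lin_coeff m * scale m + m = 0"
proof -
  define D where "D = sqrt (discr m)"
  have D2: "D^2 = (lin_coeff m)^2 - 4 * quad_coeff m * m"
    using assms by (simp add: D_def admissible_def discr_def)
  have den: "0 < lin_coeff m + D"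
    using assms by (simp add: D_def admissible_def add_pos_nonneg)
  then have scale: "scale m * (lin_coeff m + D) = 2 * m"
    by (simp add: scale_def D_def)
  have "(quad_coeff m * (scale m)^2 - lin_coeff m * scale m + m) * (lin_coeff m + D)^2
      = quad_coeff m * (scale m * (lin_coeff m + D))^2
        - lin_coeff m * (lin_coeff m + D) * (scale m * (lin_coeff m + D)) + m * (lin_coeff m + D)^2"
    by (simp add: algebra_simps power2_eq_square)
  also have "\<dots> = m * (4 * quad_coeff m * m - (lin_coeff m)^2 + D^2)"
    unfolding scale by (simp add: algebra_simps power2_eq_square)
  also have "\<dots> = 0"
    using D2 by simp
  finally show ?thesis
    using den by simp
qed

lemma mean_entry_eq:
  assumes "admissible m"
  shows "weight1 m * s^2 + weight3 m * Gp + weight4 m * Gm = m"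
proof -
  have "weight1 m * s^2 + weight3 m * Gp + weight4 m * Gm
      = lin_coeff m * scale m - quad_coeff m * (scale m)^2"
    using pos by (simp add: weight1_def weight3_def weight4_def sym_factor_def lin_coeff_def
        quad_coeff_def field_simps power2_eq_square)
  then show ?thesis
    using scale_root[OF assms] by simp
qed

lemma admissible_minor_balance:
  assumes "admissible m"
  shows "minor_balance s t Bp Bm Gp Gm (weight1 m) (weight3 m) (weight4 m)"
  unfolding minor_balance_def mean_entry_eq[OF assms]
  using pos by (simp add: weight1_def weight3_def weight4_def sym_factor_def dir3_def dir4_def
      field_simps power2_eq_square)

lemma admissible_weights_pos:
  assumes "0 < m" "admissible m"
  shows "0 < weight1 m" "0 < weight3 m" "0 < weight4 m"
proof -
  have "0 < scale m"
    using assms by (simp add: scale_def admissible_def add_pos_nonneg)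
  then show "0 < weight1 m" "0 < weight3 m" "0 < weight4 m"
    using assms(2) pos
    by (simp_all add: admissible_def weight1_def weight3_def weight4_def dir3_def dir4_def)
qed

lemma continuous_on_mass:
  assumes "\<forall>m\<in>S. admissible m"
  shows "continuous_on S mass"
proof (intro continuous_at_imp_continuous_on ballI)
  fix m assume "m \<in> S"
  then have "isCont scale m"
    using assms by (intro isCont_scale) (auto simp: admissible_def)
  then show "isCont mass m"
    unfolding mass_def weight1_def weight3_def weight4_def sym_factor_def dir3_def dir4_def
    by (intro continuous_intros) (use pos in auto)
qed

lemma small_weights_exist:
  "\<exists>e0. 0 < e0 \<and> e0 < 1 \<and> (\<forall>e. 0 < e \<and> e \<le> e0 \<longrightarrow>
     (\<exists>p q3 q4. 0 < p \<and> 0 < q3 \<and> 0 < q4 \<and> 2 * p + q3 + q4 = e \<and>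
        minor_balance s t Bp Bm Gp Gm p q3 q4))"
proof -
  obtain m0 where "0 < m0" and adm: "\<And>m. 0 \<le> m \<Longrightarrow> m \<le> m0 \<Longrightarrow> admissible m"
    using admissible_near_zero by blast
  have mass0: "mass 0 = 0"
    by (simp add: mass_def weight1_def weight3_def weight4_def scale_def)
  have mass_m0: "0 < mass m0"
    using admissible_weights_pos[OF \<open>0 < m0\<close> adm] \<open>0 < m0\<close> by (simp add: mass_def)
  have "\<exists>p q3 q4. 0 < p \<and> 0 < q3 \<and> 0 < q4 \<and> 2 * p + q3 + q4 = e \<and>
          minor_balance s t Bp Bm Gp Gm p q3 q4" if e: "0 < e" "e \<le> mass m0" for e
  proof -
    obtain m where m: "0 \<le> m" "m \<le> m0" "mass m = e"
      using IVT'[of mass 0 e m0] mass0 e \<open>0 < m0\<close> continuous_on_mass[of "{0..m0}"] adm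
      by auto
    with \<open>0 < e\<close> mass0 have "0 < m"
      by (cases "m = 0") auto
    with m adm show ?thesis
      by (intro exI[of _ "weight1 m"] exI[of _ "weight3 m"] exI[of _ "weight4 m"])
        (simp add: admissible_weights_pos admissible_minor_balance mass_def)
  qed
  then show ?thesis
    using mass_m0 by (intro exI[of _ "min (mass m0) (1/2)"]) auto
qed

end

lemma Fint_has_real_derivative:
  assumes "continuous_on UNIV a"
  shows "(Fint a has_real_derivative a x) (at x)"
proof -
  define c where "c = min 0 x - 1"
  have int: "a integrable_on {u..v}" for u v
    using assms by (intro integrable_continuous_real) (auto intro: continuous_on_subset)
  have eq: "integral {c..y} a - integral {c..0} a = Fint a y" if "y \<in> {c<..}" for y
  proof (cases "0 \<le> y")
    case True
    have "integral {c..0} a + integral {0..y} a = integral {c..y} a"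
      using True int by (intro Henstock_Kurzweil_Integration.integral_combine) (auto simp: c_def)
    then show ?thesis using True unfolding Fint_def by simp
  next
    case False
    have "integral {c..y} a + integral {y..0} a = integral {c..0} a"
      using False that int by (intro Henstock_Kurzweil_Integration.integral_combine) auto
    then show ?thesis using False unfolding Fint_def by simp
  qed
  have cx: "c < x" "x < x + 1" unfolding c_def by auto
  have "((\<lambda>y. integral {c..y} a) has_real_derivative a x) (at x within {c..x+1})"
    using assms cx by (intro integral_has_real_derivative) (auto intro: continuous_on_subset)
  then have "((\<lambda>y. integral {c..y} a - integral {c..0} a) has_real_derivative a x) (at x)"
    using at_within_Icc_at[OF cx] by (auto intro!: derivative_eq_intros)
  then show ?thesis
    by (rule has_field_derivative_transform_within_open[where S="{c<..}"]) (use cx eq in auto)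
qed

lemma Fint_increment_bounds:
  assumes "continuous_on UNIV a" "x < y" "strict_mono_on {x..y} a"
  shows "a x * (y - x) < Fint a y - Fint a x" "Fint a y - Fint a x < a y * (y - x)"
proof -
  obtain z where z: "x < z" "z < y" "Fint a y - Fint a x = (y - x) * a z"
    using MVT2[OF \<open>x < y\<close>, of "Fint a" a] Fint_has_real_derivative[OF assms(1)] by blast
  have "a x < a z" "a z < a y"
    using strict_mono_onD[OF assms(3), of x z] strict_mono_onD[OF assms(3), of z y] z by auto
  then show "a x * (y - x) < Fint a y - Fint a x" "Fint a y - Fint a x < a y * (y - x)"
    using z \<open>x < y\<close> by (simp_all add: mult.commute)
qed

lemma increments_pos_of_strict_mono:
  assumes "continuous_on UNIV a" "strict_mono_on {x0 - d..x0 + d} a" "0 < t" "t \<le> d"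
  shows "0 < a (x0 + t) - a x0" "0 < a x0 - a (x0 - t)"
    "0 < Fint a (x0 + t) - Fint a x0 - a x0 * t" "0 < Fint a (x0 - t) - Fint a x0 + a x0 * t"
proof -
  have right: "strict_mono_on {x0..x0 + t} a" and left: "strict_mono_on {x0 - t..x0} a"
    using assms(3,4) by (auto intro: monotone_on_subset[OF assms(2)])
  show "0 < a (x0 + t) - a x0" "0 < a x0 - a (x0 - t)"
    using strict_mono_onD[OF right] strict_mono_onD[OF left] assms(3) by auto
  show "0 < Fint a (x0 + t) - Fint a x0 - a x0 * t"
    using Fint_increment_bounds(1)[OF assms(1) _ right] assms(3) by simp
  show "0 < Fint a (x0 - t) - Fint a x0 + a x0 * t"
    using Fint_increment_bounds(2)[OF assms(1) _ left] assms(3) by simp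
qed

lemma strict_mono_on_near_pos_deriv:
  fixes f f' :: "real \<Rightarrow> real"
  assumes "\<forall>x. (f has_real_derivative f' x) (at x)" "isCont f' x0" "0 < f' x0"
  shows "\<exists>d>0. strict_mono_on {x0 - d..x0 + d} f"
proof -
  have "\<forall>\<^sub>F x in nhds x0. 0 < f' x"
    using assms(2,3) order_tendstoD(1) unfolding isCont_def tendsto_at_iff_tendsto_nhds by blast
  then obtain d where "0 < d" and d: "\<And>x. dist x x0 < d \<Longrightarrow> 0 < f' x"
    unfolding eventually_nhds_metric by auto
  have "strict_mono_on {x0 - d/2..x0 + d/2} f"
  proof (rule strict_mono_onI)
    fix x y assume x: "x \<in> {x0 - d/2..x0 + d/2}" and y: "y \<in> {x0 - d/2..x0 + d/2}" and "x < y"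
    have "\<exists>l. (f has_real_derivative l) (at u) \<and> 0 < l" if "x \<le> u" "u \<le> y" for u
      using assms(1) d[of u] x y that \<open>0 < d\<close> by (auto simp: dist_real_def)
    then show "f x < f y"
      by (rule DERIV_pos_imp_increasing[OF \<open>x < y\<close>])
  qed
  then show ?thesis
    using \<open>0 < d\<close> by (intro exI[of _ "d/2"]) auto
qed

lemma Mpc_discrete_zeta_small_mass:
  fixes a :: "real \<Rightarrow> real" and \<alpha> :: "real \<times> real" and s t :: real
  defines "Bp \<equiv> a (snd \<alpha> + t) - a (snd \<alpha>)"
    and "Bm \<equiv> a (snd \<alpha>) - a (snd \<alpha> - t)"
    and "Gp \<equiv> Fint a (snd \<alpha> + t) - Fint a (snd \<alpha>) - a (snd \<alpha>) * t"
    and "Gm \<equiv> Fint a (snd \<alpha> - t) - Fint a (snd \<alpha>) + a (snd \<alpha>) * t"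
  assumes "0 < s" "0 < t" "0 < Bp" "0 < Bm" "0 < Gp" "0 < Gm"
  shows "\<exists>\<epsilon>0. 0 < \<epsilon>0 \<and> \<epsilon>0 < 1 \<and>
           (\<forall>\<epsilon>. 0 < \<epsilon> \<and> \<epsilon> \<le> \<epsilon>0 \<longrightarrow>
              (\<exists>\<gamma> :: nat \<Rightarrow> real. (\<forall>j<5. 0 < \<gamma> j) \<and> (\<Sum>j\<in>{1..4}. \<gamma> j) = \<epsilon> \<and>
                 \<gamma> 0 = 1 - \<epsilon> \<and> Mpc_discrete (K1 a \<alpha>) \<gamma> (zeta a \<alpha> s t) 5))"
proof -
  interpret five_point_weights s t Bp Bm Gp Gm
    using assms(5-) by unfold_locales
  obtain \<epsilon>0 where "0 < \<epsilon>0" "\<epsilon>0 < 1" and weights: "\<And>\<epsilon>. 0 < \<epsilon> \<and> \<epsilon> \<le> \<epsilon>0 \<Longrightarrow>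
      \<exists>p q3 q4. 0 < p \<and> 0 < q3 \<and> 0 < q4 \<and> 2 * p + q3 + q4 = \<epsilon> \<and>
        minor_balance s t Bp Bm Gp Gm p q3 q4"
    using small_weights_exist by blast
  have "\<exists>\<gamma> :: nat \<Rightarrow> real. (\<forall>j<5. 0 < \<gamma> j) \<and> (\<Sum>j\<in>{1..4}. \<gamma> j) = \<epsilon> \<and>
          \<gamma> 0 = 1 - \<epsilon> \<and> Mpc_discrete (K1 a \<alpha>) \<gamma> (zeta a \<alpha> s t) 5"
    if \<epsilon>: "0 < \<epsilon> \<and> \<epsilon> \<le> \<epsilon>0" for \<epsilon>
  proof -
    obtain p q3 q4 where pq: "0 < p" "0 < q3" "0 < q4" "2 * p + q3 + q4 = \<epsilon>"
      and balance: "minor_balance s t Bp Bm Gp Gm p q3 q4"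
      using weights[OF \<epsilon>] by blast
    define \<gamma> :: "nat \<Rightarrow> real" where
      "\<gamma> j = (if j = 0 then 1 - \<epsilon> else if j \<le> 2 then p else if j = 3 then q3 else q4)" for j
    have sum5: "(\<Sum>j<5. f j) = f 0 + f 1 + f 2 + f 3 + f 4" for f :: "nat \<Rightarrow> real"
      by (simp add: numeral_eq_Suc)
    have "{1..4::nat} = {1, 2, 3, 4}" by auto
    then have mass: "(\<Sum>j\<in>{1..4}. \<gamma> j) = \<epsilon>"
      using pq(4) by (simp add: \<gamma>_def)
    have pos: "\<forall>j<5. 0 < \<gamma> j"
      using pq \<epsilon> \<open>\<epsilon>0 < 1\<close> by (simp add: \<gamma>_def)
    have "Mpc_discrete (K1 a \<alpha>) \<gamma> (zeta a \<alpha> s t) 5"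
    proof (rule Mpc_discrete_zeta)
      show "\<forall>j<5. 0 \<le> \<gamma> j" using pos by auto
      show "(\<Sum>j<5. \<gamma> j) = 1" "\<gamma> 2 = \<gamma> 1"
        using pq(4) by (simp_all add: sum5 \<gamma>_def)
    qed (use balance in \<open>simp add: \<gamma>_def Bp_def Bm_def Gp_def Gm_def\<close>)
    with mass pos show ?thesis
      by (intro exI[of _ \<gamma>]) (simp add: \<gamma>_def)
  qed
  with \<open>0 < \<epsilon>0\<close> \<open>\<epsilon>0 < 1\<close> show ?thesis
    by blast
qed

theorem theorem8:
  fixes a a' a'' :: "real \<Rightarrow> real" and \<alpha> :: "real \<times> real"
  assumes "\<forall>x. (a has_real_derivative a' x) (at x)"
    and "\<forall>x. (a' has_real_derivative a'' x) (at x)"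
    and "continuous_on UNIV a''"
    and "a' (snd \<alpha>) > 0"
  shows "\<exists>\<delta>>0. \<forall>s0 t0. 0 < s0 \<and> s0 < \<delta> \<and> 0 < t0 \<and> t0 < \<delta> \<longrightarrow>
           (\<exists>\<epsilon>0. 0 < \<epsilon>0 \<and> \<epsilon>0 < 1 \<and>
              (\<forall>\<epsilon>. 0 < \<epsilon> \<and> \<epsilon> \<le> \<epsilon>0 \<longrightarrow>
                 (\<exists>\<gamma> :: nat \<Rightarrow> real. (\<forall>j<5. 0 < \<gamma> j) \<and> (\<Sum>j\<in>{1..4}. \<gamma> j) = \<epsilon> \<and>
                    \<gamma> 0 = 1 - \<epsilon> \<and> Mpc_discrete (K1 a \<alpha>) \<gamma> (zeta a \<alpha> s0 t0) 5)))"
proof -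
  (* The hypotheses on a'' are stronger than needed: continuity of a' at snd \<alpha> suffices. *)
  have "isCont a' (snd \<alpha>)"
    using assms(2) DERIV_isCont by blast
  then obtain d where "0 < d" and mono: "strict_mono_on {snd \<alpha> - d..snd \<alpha> + d} a"
    using strict_mono_on_near_pos_deriv assms(1,4) by blast
  have cont: "continuous_on UNIV a"
    using assms(1) by (intro continuous_at_imp_continuous_on) (auto intro: DERIV_isCont)
  show ?thesis
    by (rule exI[of _ d]) (use \<open>0 < d\<close> increments_pos_of_strict_mono[OF cont mono] in
      \<open>intro conjI allI impI Mpc_discrete_zeta_small_mass; auto\<close>)
qed

end
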